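(* Let $\rho,\alpha,\lambda>0$ with $\rho,\lambda\in(0,1]$. Let $\mathcal{X}$ be a feature space, $D$ a joint distribution over pairs $(y,x)$ with $y\in\{0,1\}$ and $x\in\mathcal{X}$, $R:\mathcal{X}\to[0,1]$ a model, and $\mathcal{C}\subseteq 2^{\mathcal{X}}$ a collection of subsets. Suppose predictions are binned by the $(\lambda,\rho)$-geometric discretization $\Lambda_\lambda^\rho$, that $\mathbb{E}_D[y\mid R\in I, x\in S]\ge\rho$ for all $S\in\mathcal{C}$ and bins $I$, and that $R$ satisfies $(\alpha,\lambda)$-proportional multicalibration on $\mathcal{C}$ with respect to these bins. Then $R$ is at most $(\alpha\rho^{-\lambda}+\rho^{-\lambda}-1)$-proportionally multicalibrated on $\mathcal{C}$.
   Context: The $(\lambda,\rho)$-geometric discretization of $[0,1]$ is the set of intervals $\Lambda_\lambda^\rho=\{I_j\}_{j=0}^{1/\lambda-1}$ with $I_j=[\rho^{(1-j\lambda)},\rho^{(1-j\lambda-\lambda)})$. $R$ is $(\alpha,\lambda)$-proportionally multicalibrated on $\mathcal{C}$ (with respect to a set of bins) if for all $S\in\mathcal{C}$ and bins $I$ with $P_D(R\in I\mid x\in S)\ge\alpha\lambda$, $\frac{|\mathbb{E}_D[y\mid R\in I, x\in S]-\mathbb{E}_D[R\mid R\in I, x\in S]|}{\mathbb{E}_D[y\mid R\in I, x\in S]}\le\alpha$. For $\delta>0$, $R$ is $\delta$-proportionally multicalibrated on $\mathcal{C}$ if for every $S\in\mathcal{C}$ there exists $S'\subseteq S$ with $|S'|\ge(1-\delta)|S|$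 such that for all $r\in[0,1]$, $|\mathbb{E}_D[y\mid R=r, x\in S']-r|\le\delta\,\mathbb{E}_D[y\mid R=r, x\in S']$. "At most $\delta$-proportionally multicalibrated" means $\delta$-proportionally multicalibrated for this value of $\delta$. *)

theory Defs
  imports "HOL-Probability.Probability"
begin

text \<open>Samples are pairs z = (y, x) with label y = fst z (a real in {0,1}) and feature x = snd z.\<close>

definition geo_bin :: "real \<Rightarrow> real \<Rightarrow> nat \<Rightarrow> real set" where
  "geo_bin \<rho> lam j = {\<rho> powr (1 - real j * lam) ..< \<rho> powr (1 - real j * lam - lam)}"

definition geo_discretization :: "real \<Rightarrow> real \<Rightarrow> real set set" where
  "geo_discretization lam \<rho> = geo_bin \<rho> lam ` {j. real j < 1 / lam}"

definition feat_event :: "'x set \<Rightarrow> (real \<times> 'x) set" where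
  "feat_event S = {z. snd z \<in> S}"

definition pred_event :: "('x \<Rightarrow> real) \<Rightarrow> real set \<Rightarrow> (real \<times> 'x) set" where
  "pred_event R I = {z. R (snd z) \<in> I}"

definition cprob :: "(real \<times> 'x) measure \<Rightarrow> (real \<times> 'x) set \<Rightarrow> (real \<times> 'x) set \<Rightarrow> real" where
  "cprob D B A = measure D (B \<inter> A) / measure D A"

definition cexp :: "(real \<times> 'x) measure \<Rightarrow> ((real \<times> 'x) \<Rightarrow> real) \<Rightarrow> (real \<times> 'x) set \<Rightarrow> real" where
  "cexp D f A = (LINT z:A|D. f z) / measure D A"

definition prop_multical_bins ::
  "(real \<times> 'x) measure \<Rightarrow> ('x \<Rightarrow> real) \<Rightarrow> 'x set set \<Rightarrow> real \<Rightarrow> real \<Rightarrow> real set set \<Rightarrow> bool" where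
  "prop_multical_bins D R C \<alpha> lam bins \<longleftrightarrow>
     (\<forall>S\<in>C. \<forall>I\<in>bins.
        cprob D (pred_event R I) (feat_event S) \<ge> \<alpha> * lam \<longrightarrow>
        \<bar>cexp D fst (pred_event R I \<inter> feat_event S) - cexp D (\<lambda>z. R (snd z)) (pred_event R I \<inter> feat_event S)\<bar>
          / cexp D fst (pred_event R I \<inter> feat_event S) \<le> \<alpha>)"

text \<open>delta-proportional multicalibration, where (predictions being binned) the event
  "R = r" is the event that R falls in the bin containing r; the mass |S'| is the
  probability mass P_D(x in S').\<close>
definition delta_prop_multical ::
  "(real \<times> 'x) measure \<Rightarrow> ('x \<Rightarrow> real) \<Rightarrow> 'x set set \<Rightarrow> real set set \<Rightarrow> real \<Rightarrow> bool" where
  "delta_prop_multical D R C bins \<delta> \<longleftrightarrow>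
     (\<forall>S\<in>C. \<exists>S'. S' \<subseteq> S \<and> feat_event S' \<in> sets D \<and>
        measure D (feat_event S') \<ge> (1 - \<delta>) * measure D (feat_event S) \<and>
        (\<forall>I\<in>bins. \<forall>r\<in>I. measure D (pred_event R I \<inter> feat_event S') > 0 \<longrightarrow>
           \<bar>cexp D fst (pred_event R I \<inter> feat_event S') - r\<bar>
             \<le> \<delta> * cexp D fst (pred_event R I \<inter> feat_event S')))"

end

theory Submission
  imports Defs
begin

text \<open>Remove from \<open>S\<close> every point whose prediction lies in a bin of conditional mass below
  \<open>\<alpha>\<lambda>\<close>. There are \<open>1/\<lambda>\<close> bins, so at most an \<open>\<alpha>\<close>-fraction of the mass of \<open>S\<close> is lost, and
  every remaining bin is kept whole, so proportional multicalibration applies to it: the mean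
  label \<open>e\<close> is within \<open>\<alpha>e\<close> of the mean prediction \<open>m\<close>. A geometric bin is an interval
  \<open>[a, at)\<close> with \<open>t = \<rho>\<^sup>-\<^sup>\<lambda>\<close> containing every prediction \<open>r\<close> of the bin and (in its closure)
  \<open>m\<close>, so \<open>r\<close> and \<open>m\<close> differ by a factor of at most \<open>t\<close>, which turns the relative error
  \<open>\<alpha>\<close> into \<open>\<alpha>t + t - 1\<close>.\<close>

lemma abs_diff_le_of_proportional_error:
  fixes e m a r t \<alpha> :: real
  assumes "0 < e" "1 \<le> t" "\<bar>e - m\<bar> \<le> \<alpha> * e"
    and "a \<le> m" "m \<le> a * t" "a \<le> r" "r < a * t"
  shows "\<bar>e - r\<bar> \<le> (\<alpha> * t + t - 1) * e"
proof (cases "e \<le> r")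
  case True
  have "r \<le> m * t" using assms mult_right_mono[OF \<open>a \<le> m\<close>, of t] by linarith
  also have "\<dots> \<le> (1 + \<alpha>) * e * t"
    using assms by (intro mult_right_mono) (auto simp: abs_le_iff algebra_simps)
  finally show ?thesis using True by (simp add: algebra_simps)
next
  case False
  have "0 \<le> \<alpha>" using assms(1,3) by (smt (verit) zero_le_mult_iff)
  have "(e - a) * t \<le> (t - 1 + \<alpha>) * e" using assms by (auto simp: abs_le_iff algebra_simps)
  also have "\<dots> \<le> (\<alpha> * t + t - 1) * e * t"
  proof -
    have "0 \<le> e * (\<alpha> * (t * t - 1) + (t - 1) * (t - 1))"
      using assms(1,2) \<open>0 \<le> \<alpha>\<close> mult_mono[of 1 t 1 t]
      by (intro mult_nonneg_nonneg add_nonneg_nonneg) auto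
    moreover have "(\<alpha> * t + t - 1) * e * t - (t - 1 + \<alpha>) * e
        = e * (\<alpha> * (t * t - 1) + (t - 1) * (t - 1))"
      by (simp add: algebra_simps)
    ultimately show ?thesis by linarith
  qed
  finally have "e - a \<le> (\<alpha> * t + t - 1) * e" using \<open>1 \<le> t\<close> by simp
  then show ?thesis using False \<open>a \<le> r\<close> by simp
qed

lemma one_le_powr_neg:
  fixes \<rho> lam :: real
  assumes "0 < \<rho>" "\<rho> \<le> 1" "0 \<le> lam"
  shows "1 \<le> \<rho> powr (-lam)"
  using powr_mono'[of "-lam" 0 \<rho>] assms by simp

lemma geo_bin_eq_atLeastLessThan:
  assumes "0 < \<rho>"
  shows "geo_bin \<rho> lam j
    = {\<rho> powr (1 - real j * lam) ..< \<rho> powr (1 - real j * lam) * \<rho> powr (-lam)}"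
  using assms by (simp add: geo_bin_def powr_add[symmetric])

lemma disjnt_geo_bin_less:
  assumes "0 < \<rho>" "\<rho> \<le> 1" "0 \<le> lam" "i < j"
  shows "disjnt (geo_bin \<rho> lam i) (geo_bin \<rho> lam j)"
proof -
  have "real i * lam + lam \<le> real j * lam"
    using assms(3,4) mult_right_mono[of "real i + 1" "real j" lam] by (simp add: distrib_right)
  then have "\<rho> powr (1 - real i * lam - lam) \<le> \<rho> powr (1 - real j * lam)"
    using assms by (intro powr_mono') auto
  then show ?thesis by (auto simp: geo_bin_def disjnt_def)
qed

lemma disjoint_geo_discretization:
  assumes "0 < \<rho>" "\<rho> \<le> 1" "0 \<le> lam"
  shows "disjoint (geo_discretization lam \<rho>)"
  unfolding geo_discretization_def
proof (rule pairwise_imageI)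
  fix i j assume "geo_bin \<rho> lam i \<noteq> geo_bin \<rho> lam j"
  then have "i < j \<or> j < i" by (metis linorder_neqE_nat)
  then show "disjnt (geo_bin \<rho> lam i) (geo_bin \<rho> lam j)"
    using disjnt_geo_bin_less[OF assms] disjnt_sym by blast
qed

lemma finite_card_geo_discretization:
  assumes "real n = 1 / lam"
  shows "finite (geo_discretization lam \<rho>)" "card (geo_discretization lam \<rho>) \<le> n"
proof -
  have "{j. real j < 1 / lam} = {..<n}" using assms by auto
  then show "finite (geo_discretization lam \<rho>)" "card (geo_discretization lam \<rho>) \<le> n"
    unfolding geo_discretization_def using card_image_le[of "{..<n}"] by auto
qed

lemma pred_event_inter_sets:
  assumes "(\<lambda>z. R (snd z)) \<in> borel_measurable M" "I \<in> sets borel" "F \<in> sets M"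
  shows "pred_event R I \<inter> F \<in> sets M"
proof -
  have "pred_event R I \<inter> F = ((\<lambda>z. R (snd z)) -` I \<inter> space M) \<inter> F"
    using sets.sets_into_space[OF assms(3)] by (auto simp: pred_event_def)
  then show ?thesis using measurable_sets[OF assms(1,2)] assms(3) by auto
qed

lemma cexp_mem_atLeastAtMost:
  fixes M :: "(real \<times> 'x) measure"
  assumes "finite_measure M" "A \<in> sets M" "0 < measure M A" "integrable M f"
    and "\<And>z. z \<in> A \<Longrightarrow> f z \<in> {a..b}"
  shows "cexp M f A \<in> {a..b}"
proof -
  interpret finite_measure M by fact
  have f: "set_integrable M A f"
    unfolding set_integrable_def using assms(2,4) by (rule integrable_mult_indicator)
  have const: "set_integrable M A (\<lambda>_. c)" for c :: real
    unfolding set_integrable_def using assms(2) by (intro integrable_mult_indicator) auto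
  have "measure M A * a \<le> (LINT z:A|M. f z)"
    using set_integral_mono[OF const f] assms(2,5) by (simp add: set_integral_const)
  moreover have "(LINT z:A|M. f z) \<le> measure M A * b"
    using set_integral_mono[OF f const] assms(2,5) by (simp add: set_integral_const)
  ultimately show ?thesis
    using assms(3) by (simp add: cexp_def field_simps)
qed

lemma proportional_error_on_geo_bin:
  fixes M :: "(real \<times> 'x) measure"
  assumes "finite_measure M" and "0 < \<rho>" "\<rho> \<le> 1" "0 \<le> lam"
    and "A \<in> sets M" "0 < measure M A" "integrable M f"
    and "\<And>z. z \<in> A \<Longrightarrow> f z \<in> geo_bin \<rho> lam j" "r \<in> geo_bin \<rho> lam j"
    and "0 < e" "\<bar>e - cexp M f A\<bar> \<le> \<alpha> * e"
  shows "\<bar>e - r\<bar> \<le> (\<alpha> * \<rho> powr (-lam) + \<rho> powr (-lam) - 1) * e"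
proof -
  define a where "a = \<rho> powr (1 - real j * lam)"
  define t where "t = \<rho> powr (-lam)"
  have bin: "geo_bin \<rho> lam j = {a ..< a * t}"
    unfolding a_def t_def using assms(2) by (rule geo_bin_eq_atLeastLessThan)
  have "geo_bin \<rho> lam j \<subseteq> {a .. a * t}" using bin by auto
  then have "cexp M f A \<in> {a .. a * t}"
    using assms(1,5-8) by (intro cexp_mem_atLeastAtMost) blast+
  moreover have "1 \<le> t" unfolding t_def using assms(2-4) by (rule one_le_powr_neg)
  ultimately show ?thesis unfolding t_def[symmetric] using assms(9)
    by (intro abs_diff_le_of_proportional_error[OF assms(10) _ assms(11)]) (auto simp: bin)
qed

definition drop_small_bins ::
  "(real \<times> 'x) measure \<Rightarrow> ('x \<Rightarrow> real) \<Rightarrow> real set set \<Rightarrow> real \<Rightarrow> 'x set \<Rightarrow> 'x set" where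
  "drop_small_bins D R bins c S =
     {x \<in> S. \<forall>I\<in>bins. R x \<in> I \<longrightarrow> c \<le> cprob D (pred_event R I) (feat_event S)}"

lemma feat_event_drop_small_bins:
  "feat_event (drop_small_bins D R bins c S) = feat_event S -
     (\<Union>I\<in>{I\<in>bins. cprob D (pred_event R I) (feat_event S) < c}. pred_event R I \<inter> feat_event S)"
  by (auto simp: drop_small_bins_def feat_event_def pred_event_def not_le)

lemma pred_event_inter_drop_small_bins:
  assumes "disjoint bins" "I \<in> bins"
    and "pred_event R I \<inter> feat_event (drop_small_bins D R bins c S) \<noteq> {}"
  shows "c \<le> cprob D (pred_event R I) (feat_event S)"
    and "pred_event R I \<inter> feat_event (drop_small_bins D R bins c S) = pred_event R I \<inter> feat_event S"
proof -
  show c: "c \<le> cprob D (pred_event R I) (feat_event S)"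
    using assms(2,3) by (auto simp: drop_small_bins_def feat_event_def pred_event_def)
  have "J = I" if "J \<in> bins" "R x \<in> J" "R x \<in> I" for J x
    using assms(1,2) that by (auto simp: pairwise_def disjnt_def)
  then show "pred_event R I \<inter> feat_event (drop_small_bins D R bins c S) = pred_event R I \<inter> feat_event S"
    using c by (auto simp: drop_small_bins_def feat_event_def pred_event_def)
qed

lemma measure_inter_le_of_cprob_less:
  assumes "finite_measure M" "A \<in> sets M" "cprob M B A < c"
  shows "measure M (B \<inter> A) \<le> c * measure M A"
proof (cases "measure M A = 0")
  case True
  then show ?thesis
    using finite_measure.finite_measure_mono[OF assms(1), of "B \<inter> A" A] assms(2) by simp
next
  case False
  then show ?thesis using assms(3) measure_nonneg[of M A] by (simp add: cprob_def divide_less_eq)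
qed

lemma measure_drop_small_bins:
  fixes M :: "(real \<times> 'x) measure" and c :: real
  assumes "finite_measure M" "finite bins" "0 \<le> c" "feat_event S \<in> sets M"
    and "\<And>I. I \<in> bins \<Longrightarrow> pred_event R I \<inter> feat_event S \<in> sets M"
  shows "feat_event (drop_small_bins M R bins c S) \<in> sets M"
    and "(1 - card bins * c) * measure M (feat_event S)
           \<le> measure M (feat_event (drop_small_bins M R bins c S))"
proof -
  interpret finite_measure M by fact
  define small where "small = {I\<in>bins. cprob M (pred_event R I) (feat_event S) < c}"
  define U where "U = (\<Union>I\<in>small. pred_event R I \<inter> feat_event S)"
  have small: "finite small" "small \<subseteq> bins" using assms(2) by (auto simp: small_def)
  have U: "U \<in> sets M" unfolding U_def using small assms(5) by blast
  show "feat_event (drop_small_bins M R bins c S) \<in> sets M"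
    unfolding feat_event_drop_small_bins small_def[symmetric] U_def[symmetric] using U assms(4) by blast
  have "measure M U \<le> (\<Sum>I\<in>small. measure M (pred_event R I \<inter> feat_event S))"
    unfolding U_def using small assms(5) by (intro finite_measure_subadditive_finite) auto
  also have "\<dots> \<le> (\<Sum>I\<in>small. c * measure M (feat_event S))"
    using assms(1,4) by (intro sum_mono measure_inter_le_of_cprob_less) (auto simp: small_def)
  also have "\<dots> \<le> card bins * c * measure M (feat_event S)"
    using card_mono[OF assms(2) small(2)] assms(3) measure_nonneg[of M "feat_event S"]
    by (simp add: mult.assoc mult_right_mono)
  finally have "measure M U \<le> card bins * c * measure M (feat_event S)" .
  moreover have "measure M (feat_event (drop_small_bins M R bins c S)) = measure M (feat_event S) - measure M U"
    unfolding feat_event_drop_small_bins small_def[symmetric] U_def[symmetric]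
    using U assms(4) by (intro finite_measure_Diff) (auto simp: U_def)
  ultimately show "(1 - card bins * c) * measure M (feat_event S)
           \<le> measure M (feat_event (drop_small_bins M R bins c S))"
    by (simp add: algebra_simps)
qed

lemma delta_prop_multical_of_large_bins:
  fixes D :: "(real \<times> 'x) measure" and c \<delta> :: real
  assumes "finite_measure D" "finite bins" "disjoint bins" "0 \<le> c" "card bins * c \<le> \<delta>"
    and "\<And>S. S \<in> C \<Longrightarrow> feat_event S \<in> sets D"
    and "\<And>S I. S \<in> C \<Longrightarrow> I \<in> bins \<Longrightarrow> pred_event R I \<inter> feat_event S \<in> sets D"
    and calibrated: "\<And>S I r. S \<in> C \<Longrightarrow> I \<in> bins \<Longrightarrow> r \<in> I \<Longrightarrow>
           0 < measure D (pred_event R I \<inter> feat_event S) \<Longrightarrow>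
           c \<le> cprob D (pred_event R I) (feat_event S) \<Longrightarrow>
           \<bar>cexp D fst (pred_event R I \<inter> feat_event S) - r\<bar>
             \<le> \<delta> * cexp D fst (pred_event R I \<inter> feat_event S)"
  shows "delta_prop_multical D R C bins \<delta>"
  unfolding delta_prop_multical_def
proof
  fix S assume S: "S \<in> C"
  let ?S' = "drop_small_bins D R bins c S"
  have mass: "feat_event ?S' \<in> sets D"
    "(1 - card bins * c) * measure D (feat_event S) \<le> measure D (feat_event ?S')"
    using measure_drop_small_bins[OF assms(1,2,4) assms(6)[OF S] assms(7)[OF S]] by auto
  have "(1 - \<delta>) * measure D (feat_event S) \<le> (1 - card bins * c) * measure D (feat_event S)"
    using assms(5) measure_nonneg[of D "feat_event S"] by (intro mult_right_mono) auto
  moreover have "\<bar>cexp D fst (pred_event R I \<inter> feat_event ?S') - r\<bar>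
      \<le> \<delta> * cexp D fst (pred_event R I \<inter> feat_event ?S')"
    if I: "I \<in> bins" "r \<in> I" and pos: "0 < measure D (pred_event R I \<inter> feat_event ?S')" for I r
  proof -
    have "pred_event R I \<inter> feat_event ?S' \<noteq> {}" using pos by auto
    note kept = pred_event_inter_drop_small_bins[OF assms(3) I(1) this]
    show ?thesis unfolding kept(2) using calibrated[OF S I] kept pos by simp
  qed
  ultimately show "\<exists>S'\<subseteq>S. feat_event S' \<in> sets D \<and>
      (1 - \<delta>) * measure D (feat_event S) \<le> measure D (feat_event S') \<and>
      (\<forall>I\<in>bins. \<forall>r\<in>I. 0 < measure D (pred_event R I \<inter> feat_event S') \<longrightarrow>
         \<bar>cexp D fst (pred_event R I \<inter> feat_event S') - r\<bar>
           \<le> \<delta> * cexp D fst (pred_event R I \<inter> feat_event S'))"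
    using mass by (intro exI[of _ ?S'] conjI ballI impI) (auto simp: drop_small_bins_def)
qed

theorem claim18:
  fixes D :: "(real \<times> 'x) measure" and R :: "'x \<Rightarrow> real" and C :: "'x set set"
    and \<rho> \<alpha> lam :: real
  assumes "0 < \<rho>" "\<rho> \<le> 1" "0 < \<alpha>" "0 < lam" "lam \<le> 1"
    and "\<exists>m::nat. real m = 1 / lam"
    and "prob_space D"
    and "fst \<in> borel_measurable D"
    and "AE z in D. fst z \<in> {0, 1}"
    and "(\<lambda>z. R (snd z)) \<in> borel_measurable D"
    and "\<And>x. R x \<in> {0..1}"
    and "\<And>S. S \<in> C \<Longrightarrow> feat_event S \<in> sets D"
    and "\<And>S I. S \<in> C \<Longrightarrow> I \<in> geo_discretization lam \<rho> \<Longrightarrow>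
           measure D (pred_event R I \<inter> feat_event S) > 0 \<Longrightarrow>
           cexp D fst (pred_event R I \<inter> feat_event S) \<ge> \<rho>"
    and "prop_multical_bins D R C \<alpha> lam (geo_discretization lam \<rho>)"
  shows "delta_prop_multical D R C (geo_discretization lam \<rho>)
           (\<alpha> * \<rho> powr (-lam) + \<rho> powr (-lam) - 1)"
proof -
  let ?bins = "geo_discretization lam \<rho>"
  let ?\<delta> = "\<alpha> * \<rho> powr (-lam) + \<rho> powr (-lam) - 1"
  have D: "finite_measure D" using assms(7) by (simp add: prob_space_def)
  obtain n :: nat where n: "real n = 1 / lam" using assms(6) by blast
  have "real (card ?bins) * (\<alpha> * lam) \<le> real n * (\<alpha> * lam)"
    using finite_card_geo_discretization(2)[OF n] assms(3,4) by (intro mult_right_mono) auto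
  also have "\<dots> = \<alpha>" using n assms(4) by simp
  finally have "real (card ?bins) * (\<alpha> * lam) \<le> \<alpha>" .
  moreover have t: "1 \<le> \<rho> powr (-lam)" using one_le_powr_neg assms(1,2,4) by simp
  moreover have "\<alpha> * 1 \<le> \<alpha> * \<rho> powr (-lam)" using t assms(3) by (intro mult_left_mono) auto
  ultimately have card: "card ?bins * (\<alpha> * lam) \<le> ?\<delta>" by linarith
  have sets: "pred_event R I \<inter> feat_event S \<in> sets D" if "S \<in> C" "I \<in> ?bins" for S I
    using that assms(10,12)
    by (intro pred_event_inter_sets) (auto simp: geo_discretization_def geo_bin_def)
  have int: "integrable D (\<lambda>z. R (snd z))"
    using D assms(10,11)
    by (intro finite_measure.integrable_const_bound[where B=1]) (auto simp: abs_le_iff)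
  show ?thesis
  proof (rule delta_prop_multical_of_large_bins[OF D _ _ _ card assms(12) sets])
    fix S I r assume S: "S \<in> C" and I: "I \<in> ?bins" "r \<in> I"
      and pos: "0 < measure D (pred_event R I \<inter> feat_event S)"
      and large: "\<alpha> * lam \<le> cprob D (pred_event R I) (feat_event S)"
    obtain j where j: "I = geo_bin \<rho> lam j" using I(1) by (auto simp: geo_discretization_def)
    have "\<rho> \<le> cexp D fst (pred_event R I \<inter> feat_event S)" using assms(13)[OF S I(1) pos] .
    then show "\<bar>cexp D fst (pred_event R I \<inter> feat_event S) - r\<bar>
        \<le> ?\<delta> * cexp D fst (pred_event R I \<inter> feat_event S)"
      using assms(1,2,4,14) S I pos large
      by (intro proportional_error_on_geo_bin[OF D _ _ _ sets[OF S I(1)] _ int])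
        (auto simp: j pred_event_def prop_multical_bins_def divide_le_eq)
  qed (use finite_card_geo_discretization(1)[OF n] disjoint_geo_discretization assms(1-4) in auto)
qed

end
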